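(* Let $\{p_{\alpha}:\alpha<2^{\mathfrak{c}}\}\subseteq\omega^*$ be a family with the following property (P): for every countably infinite $D\subseteq 2^{\mathfrak{c}}$ and every family $\{f_\alpha:\alpha\in D\}$ of one-to-one sequences $f_\alpha:\omega\to[2^{\mathfrak{c}}]^{<\omega}$ each with linearly independent range, there are pairwise disjoint sets $U_\alpha\subseteq\omega$ ($\alpha\in D$) with $U_\alpha\in p_\alpha$ for all $\alpha\in D$ and $\{f_\alpha(n):\alpha\in D,\ n\in U_\alpha\}$ linearly independent. Let $I\subseteq 2^{\mathfrak{c}}$ and let $\{f_{\alpha}:\alpha\in I\}$ be a family of one-to-one sequences $f_\alpha:\omega\to[2^{\mathfrak{c}}]^{<\omega}$, each with linearly independent range. Let $D\subseteq 2^{\mathfrak{c}}$ be countably infinite such that $\bigcup_{n\in\omega}f_{\alpha}(n)\subseteq D$ for every $\alpha\in D\cap I$. Let $D_0\subseteq D$ be finite and $F:D_0\to\{0,1\}$ any function. Then there exists a group homomorphism $\phi:[D]^{<\omega}\to\{0,1\}$ such that $\phi(\{\alpha\})=p_{\alpha}\text{-}\lim_{n\in\omega}\phi(f_{\alpha}(n))$ for every $\alpha\in D\cap I$, and $\phi(\{d\})=F(d)$ for every $d\in D_0$.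
   Context: $\mathfrak{c}=2^{\aleph_0}$, and $2^{\mathfrak{c}}$ is regarded as the set of ordinals below it. $\omega^*$ is the set of free ultrafilters on $\omega$. For a set $X$, $[X]^{<\omega}$ is the set of finite subsets of $X$, a Boolean group (vector space over the field $\{0,1\}=\mathbb{Z}/2$) under symmetric difference with zero $\emptyset$; linear independence refers to this structure, and $\{0,1\}$ is the group $\mathbb{Z}/2$. For $p\in\omega^*$ and a sequence $(x_n)$ in $\{0,1\}$ (discrete), $p\text{-}\lim_{n}x_n$ is the unique $i\in\{0,1\}$ with $\{n:x_n=i\}\in p$. (A family with property (P) exists in ZFC.) *)

theory Defs
  imports Main "HOL-Library.Equipollence" "HOL-Library.Countable_Set"
begin

definition free_ultrafilter :: "nat set set \<Rightarrow> bool" where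
  "free_ultrafilter U \<longleftrightarrow>
     UNIV \<in> U \<and> {} \<notin> U \<and>
     (\<forall>A B. A \<in> U \<and> B \<in> U \<longrightarrow> A \<inter> B \<in> U) \<and>
     (\<forall>A B. A \<in> U \<and> A \<subseteq> B \<longrightarrow> B \<in> U) \<and>
     (\<forall>A. A \<in> U \<or> - A \<in> U) \<and>
     (\<forall>A. finite A \<longrightarrow> A \<notin> U)"

text \<open>Symmetric difference (the group operation of [X]^{<omega}).\<close>
definition symd :: "'a set \<Rightarrow> 'a set \<Rightarrow> 'a set" where
  "symd A B = (A - B) \<union> (B - A)"

text \<open>Sum over Z/2 of a finite collection of finite sets: points lying in an odd number of them.\<close>
definition zsum :: "'a set set \<Rightarrow> 'a set" where
  "zsum T = {x. odd (card {A \<in> T. x \<in> A})}"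

definition lin_indep :: "'a set set \<Rightarrow> bool" where
  "lin_indep S \<longleftrightarrow> (\<forall>T. T \<subseteq> S \<and> finite T \<and> T \<noteq> {} \<longrightarrow> zsum T \<noteq> {})"

definition lin_indep_fam :: "('i \<Rightarrow> 'a set) \<Rightarrow> 'i set \<Rightarrow> bool" where
  "lin_indep_fam x J \<longleftrightarrow> inj_on x J \<and> lin_indep (x ` J)"

text \<open>Group homomorphism [D]^{<omega} -> Z/2, with Z/2 = bool under exclusive or (False = 0, True = 1).\<close>
definition z2_hom :: "'a set \<Rightarrow> ('a set \<Rightarrow> bool) \<Rightarrow> bool" where
  "z2_hom D \<phi> \<longleftrightarrow> (\<forall>A B. finite A \<and> A \<subseteq> D \<and> finite B \<and> B \<subseteq> D \<longrightarrow>
       \<phi> (symd A B) = (\<phi> A \<noteq> \<phi> B))"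

definition plim :: "nat set set \<Rightarrow> (nat \<Rightarrow> bool) \<Rightarrow> bool" where
  "plim p x = (THE i. {n. x n = i} \<in> p)"

definition good_seq :: "(nat \<Rightarrow> 'a set) \<Rightarrow> bool" where
  "good_seq f \<longleftrightarrow> inj f \<and> (\<forall>n. finite (f n)) \<and> lin_indep (range f)"

text \<open>Property (P) for a family p indexed by the (type of the) cardinal 2^c.\<close>
definition propP :: "('k \<Rightarrow> nat set set) \<Rightarrow> bool" where
  "propP p \<longleftrightarrow> (\<forall>(D::'k set) (g::'k \<Rightarrow> nat \<Rightarrow> 'k set).
     countable D \<and> infinite D \<and> (\<forall>\<alpha>\<in>D. good_seq (g \<alpha>)) \<longrightarrow>
     (\<exists>U::'k \<Rightarrow> nat set.
        (\<forall>\<alpha>\<in>D. U \<alpha> \<in> p \<alpha>) \<and>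
        (\<forall>\<alpha>\<in>D. \<forall>\<beta>\<in>D. \<alpha> \<noteq> \<beta> \<longrightarrow> U \<alpha> \<inter> U \<beta> = {}) \<and>
        lin_indep_fam (\<lambda>(\<alpha>, n). g \<alpha> n) {(\<alpha>, n). \<alpha> \<in> D \<and> n \<in> U \<alpha>}))"

end

(* Finite subsets of 'k are identified with vectors of the Z/2-vector space 'k => bit, symmetric
   difference becoming addition. For alpha in I, adding {alpha} to all but finitely many f alpha n
   keeps the range independent. Property (P), applied to these twisted sequences, yields p alpha-large
   sets of indices on which all the vectors f alpha n + {alpha} are jointly independent; discarding
   finitely many of them makes them independent together with the singletons {d}, d in D0, because
   those singletons span a finite space. Extending from this independent set gives a linear functional
   that vanishes on every remaining f alpha n + {alpha} and equals F d at {d}; it therefore agrees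
   with phi {alpha} at f alpha n for p alpha-almost all n. *)

theory Submission
  imports Defs "HOL-Library.Z2" "HOL-Library.Function_Algebras" "HOL.Vector_Spaces"
begin

definition z2vec :: "'a set \<Rightarrow> 'a \<Rightarrow> bit" where
  "z2vec A x = of_bool (x \<in> A)"

lemma z2vec_eq_0_iff [simp]: "z2vec A = 0 \<longleftrightarrow> A = {}"
  by (auto simp: z2vec_def fun_eq_iff)

lemma z2vec_empty [simp]: "z2vec {} = 0"
  by (simp add: z2vec_def fun_eq_iff)

lemma z2vec_eq_iff: "z2vec A = z2vec B \<longleftrightarrow> A = B"
  by (auto simp: z2vec_def fun_eq_iff)

lemma z2vec_symd: "z2vec (symd A B) = z2vec A + z2vec B"
  by (auto simp: z2vec_def symd_def fun_eq_iff)

lemma z2_add_eq_0_iff [simp]: "(v :: 'a \<Rightarrow> bit) + w = 0 \<longleftrightarrow> v = w"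
  by (simp add: fun_eq_iff) (metis bit_not_one_iff)

lemma z2_numeral_2_eq_0 [simp]: "(2 :: 'a \<Rightarrow> bit) = 0"
  by (simp add: fun_eq_iff)

lemma zsum_insert:
  assumes "finite T" "A \<notin> T"
  shows "zsum (insert A T) = symd A (zsum T)"
proof -
  have "card {B \<in> insert A T. x \<in> B} = card {B \<in> T. x \<in> B} + of_bool (x \<in> A)" for x
  proof (cases "x \<in> A")
    case True
    then have "{B \<in> insert A T. x \<in> B} = insert A {B \<in> T. x \<in> B}" by auto
    then show ?thesis using assms True by simp
  next
    case False
    then have "{B \<in> insert A T. x \<in> B} = {B \<in> T. x \<in> B}" by auto
    then show ?thesis using False by simp
  qed
  then show ?thesis by (auto simp: zsum_def symd_def)
qed

lemma z2vec_zsum: "finite T \<Longrightarrow> z2vec (zsum T) = (\<Sum>A\<in>T. z2vec A)"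
proof (induction T rule: finite_induct)
  case empty
  then show ?case by (simp add: zsum_def z2vec_def fun_eq_iff)
next
  case (insert A T)
  then show ?case by (simp add: zsum_insert z2vec_symd)
qed

lemma sum_z2vec_singletons: "finite S \<Longrightarrow> (\<Sum>d\<in>S. z2vec {d}) = z2vec S"
  by (induction S rule: finite_induct) (auto simp: z2vec_def fun_eq_iff)

(* Over Z/2 a nontrivial linear combination is just the sum over a nonempty finite set of indices. *)
definition z2_independent_on :: "('i \<Rightarrow> 'a \<Rightarrow> bit) \<Rightarrow> 'i set \<Rightarrow> bool" where
  "z2_independent_on v K \<longleftrightarrow> (\<forall>T\<subseteq>K. finite T \<and> T \<noteq> {} \<longrightarrow> sum v T \<noteq> 0)"

lemma z2_independent_onD:
  "z2_independent_on v K \<Longrightarrow> T \<subseteq> K \<Longrightarrow> finite T \<Longrightarrow> sum v T = 0 \<Longrightarrow> T = {}"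
  unfolding z2_independent_on_def by blast

lemma z2_independent_onI:
  "(\<And>T. T \<subseteq> K \<Longrightarrow> finite T \<Longrightarrow> sum v T = 0 \<Longrightarrow> T = {}) \<Longrightarrow> z2_independent_on v K"
  unfolding z2_independent_on_def by blast

lemma z2_independent_on_subset:
  "z2_independent_on v K \<Longrightarrow> K' \<subseteq> K \<Longrightarrow> z2_independent_on v K'"
  unfolding z2_independent_on_def by blast

lemma z2_independent_on_sum_eq:
  assumes indep: "z2_independent_on v K" and T: "T \<subseteq> K" "finite T" and S: "S \<subseteq> K" "finite S"
    and eq: "sum v T = sum v S"
  shows "T = S"
proof -
  have "sum v (T \<inter> S) + sum v (T - S) = sum v (T \<inter> S) + sum v (S - T)"
    using eq sum.Int_Diff[OF T(2), of v S] sum.Int_Diff[OF S(2), of v T] by (simp add: Int_commute)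
  then have "sum v (T - S) = sum v (S - T)" by simp
  moreover have "sum v ((T - S) \<union> (S - T)) = sum v (T - S) + sum v (S - T)"
    using T(2) S(2) by (intro sum.union_disjoint) auto
  ultimately have "sum v ((T - S) \<union> (S - T)) = 0" by (simp only: z2_add_eq_0_iff)
  then have "(T - S) \<union> (S - T) = {}"
    by (rule z2_independent_onD[OF indep, rotated 2]) (use T S in auto)
  then show ?thesis by blast
qed

lemma inj_on_if_z2_independent_on:
  assumes "z2_independent_on v K"
  shows "inj_on v K"
proof (rule inj_onI)
  fix i j assume "i \<in> K" "j \<in> K" "v i = v j"
  then have "{i} = {j}" using z2_independent_on_sum_eq[OF assms, of "{i}" "{j}"] by simp
  then show "i = j" by simp
qed

lemma lin_indep_fam_iff_z2_independent_on:
  "lin_indep_fam g K \<longleftrightarrow> z2_independent_on (\<lambda>i. z2vec (g i)) K"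
proof
  assume fam: "lin_indep_fam g K"
  show "z2_independent_on (\<lambda>i. z2vec (g i)) K"
  proof (rule z2_independent_onI)
    fix T assume T: "T \<subseteq> K" "finite T" and sum0: "(\<Sum>i\<in>T. z2vec (g i)) = 0"
    have "inj_on g T"
      using fam T(1) unfolding lin_indep_fam_def by (rule inj_on_subset[OF conjunct1])
    then have "z2vec (zsum (g ` T)) = 0"
      using T(2) sum0 by (simp add: z2vec_zsum sum.reindex)
    moreover have "g ` T \<subseteq> g ` K" "finite (g ` T)"
      using T by auto
    ultimately show "T = {}"
      using fam unfolding lin_indep_fam_def lin_indep_def by auto
  qed
next
  assume indep: "z2_independent_on (\<lambda>i. z2vec (g i)) K"
  have inj: "inj_on g K"
    using inj_on_if_z2_independent_on[OF indep] by (auto simp: inj_on_def z2vec_eq_iff)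
  have "zsum S \<noteq> {}" if S: "S \<subseteq> g ` K" "finite S" "S \<noteq> {}" for S
  proof
    assume zsum0: "zsum S = {}"
    obtain T where T: "T \<subseteq> K" "S = g ` T"
      using S(1) by (rule subset_imageE)
    have injT: "inj_on g T"
      using inj T(1) by (rule inj_on_subset)
    then have "finite T"
      using S(2) T(2) by (simp add: finite_image_iff)
    moreover have "(\<Sum>i\<in>T. z2vec (g i)) = 0"
      using zsum0 z2vec_zsum[OF S(2)] injT T(2) by (simp add: sum.reindex)
    ultimately have "T = {}"
      using z2_independent_onD[OF indep T(1)] by blast
    then show False using S(3) T(2) by simp
  qed
  then show "lin_indep_fam g K"
    unfolding lin_indep_fam_def lin_indep_def using inj by blast
qed

lemma lin_indep_fam_subset: "lin_indep_fam g K \<Longrightarrow> K' \<subseteq> K \<Longrightarrow> lin_indep_fam g K'"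
  unfolding lin_indep_fam_iff_z2_independent_on by (rule z2_independent_on_subset)

lemma lin_indep_fam_cong:
  "(\<And>i. i \<in> K \<Longrightarrow> g i = h i) \<Longrightarrow> lin_indep_fam g K \<longleftrightarrow> lin_indep_fam h K"
  by (simp add: lin_indep_fam_def cong: inj_on_cong image_cong)

lemma good_seq_iff_z2_independent_on:
  "good_seq b \<longleftrightarrow> (\<forall>n. finite (b n)) \<and> z2_independent_on (\<lambda>n. z2vec (b n)) UNIV"
  by (auto simp: good_seq_def lin_indep_fam_def simp flip: lin_indep_fam_iff_z2_independent_on)

lemma z2_independent_on_singletons: "z2_independent_on (\<lambda>d. z2vec {d}) A"
  by (rule z2_independent_onI) (simp add: sum_z2vec_singletons)

lemma good_seq_singletons:
  assumes "inj e"
  shows "good_seq (\<lambda>n. {e n})"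
  unfolding good_seq_iff_z2_independent_on
proof (intro conjI allI z2_independent_onI)
  fix T :: "nat set" assume "finite T" and sum0: "(\<Sum>n\<in>T. z2vec {e n}) = 0"
  have "(\<Sum>n\<in>T. z2vec {e n}) = (\<Sum>d\<in>e ` T. z2vec {d})"
    using assms by (simp add: sum.reindex inj_on_subset)
  also have "\<dots> = z2vec (e ` T)"
    using \<open>finite T\<close> by (simp add: sum_z2vec_singletons)
  finally show "T = {}" using sum0 by simp
qed simp

lemma z2_independent_on_unique_sum:
  assumes indep: "z2_independent_on v K"
  obtains T where "T \<subseteq> K" "finite T" "\<And>S. S \<subseteq> K \<Longrightarrow> finite S \<Longrightarrow> sum v S = e \<Longrightarrow> S = T"
proof (cases "\<exists>T\<subseteq>K. finite T \<and> sum v T = e")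
  case True
  then obtain T where T: "T \<subseteq> K" "finite T" "sum v T = e" by blast
  show ?thesis
    by (rule that[OF T(1,2)]) (use z2_independent_on_sum_eq[OF indep _ _ T(1,2)] T(3) in simp)
next
  case False
  then show ?thesis by (intro that[of "{}"]) auto
qed

lemma of_nat_z2_cases: "(of_nat n :: 'a \<Rightarrow> bit) \<in> {0, 1}"
  by (cases "of_nat n :: bit") (simp_all add: of_nat_fun fun_eq_iff)

lemma z2_independent_on_twist:
  fixes e :: "'a \<Rightarrow> bit"
  assumes indep: "z2_independent_on v K"
  obtains T where "finite T" "z2_independent_on (\<lambda>i. if i \<in> T then v i else v i + e) K"
proof -
  obtain T where T: "T \<subseteq> K" "finite T"
    and uniq: "\<And>S. S \<subseteq> K \<Longrightarrow> finite S \<Longrightarrow> sum v S = e \<Longrightarrow> S = T"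
    using z2_independent_on_unique_sum[OF indep, of e] by blast
  \<comment> \<open>Leaving the representation T of e untwisted rules out the one way a twisted sum could vanish.\<close>
  have "z2_independent_on (\<lambda>i. if i \<in> T then v i else v i + e) K"
  proof (rule z2_independent_onI)
    fix S assume S: "S \<subseteq> K" "finite S"
      and sum0: "(\<Sum>i\<in>S. if i \<in> T then v i else v i + e) = 0"
    define c :: "'a \<Rightarrow> bit" where "c = of_nat (card (S - T))"
    have "(\<Sum>i\<in>S. if i \<in> T then v i else v i + e) = (\<Sum>i\<in>S. v i + (if i \<in> T then 0 else e))"
      by (rule sum.cong) simp_all
    also have "\<dots> = sum v S + (\<Sum>i\<in>S - T. e)"
      using S(2) by (simp add: sum.distrib sum.If_cases Diff_eq)
    finally have sum_eq: "sum v S = c * e"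
      using sum0 by (simp add: c_def)
    have "c = 0 \<or> c = 1"
      using of_nat_z2_cases unfolding c_def by blast
    then show "S = {}"
    proof
      assume "c = 0"
      then show "S = {}"
        using sum_eq z2_independent_onD[OF indep S] by simp
    next
      assume "c = 1"
      then have "S = T"
        using sum_eq uniq[OF S] by simp
      then show "S = {}"
        using \<open>c = 1\<close> by (simp add: c_def)
    qed
  qed
  with T(2) show ?thesis by (rule that)
qed

lemma good_seq_twist:
  assumes "good_seq b"
  obtains T where "finite T" "good_seq (\<lambda>n. if n \<in> T then b n else symd (b n) {a})"
proof -
  have "z2_independent_on (\<lambda>n. z2vec (b n)) UNIV"
    using assms by (simp add: good_seq_iff_z2_independent_on)
  then obtain T where T: "finite T"
    and indep: "z2_independent_on (\<lambda>n. if n \<in> T then z2vec (b n) else z2vec (b n) + z2vec {a}) UNIV"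
    by (rule z2_independent_on_twist)
  have "good_seq (\<lambda>n. if n \<in> T then b n else symd (b n) {a})"
    unfolding good_seq_iff_z2_independent_on
  proof
    show "\<forall>n. finite (if n \<in> T then b n else symd (b n) {a})"
      using assms by (simp add: good_seq_def symd_def)
    have "(\<lambda>n. z2vec (if n \<in> T then b n else symd (b n) {a}))
        = (\<lambda>n. if n \<in> T then z2vec (b n) else z2vec (b n) + z2vec {a})"
      by (simp add: fun_eq_iff z2vec_symd)
    with indep show "z2_independent_on (\<lambda>n. z2vec (if n \<in> T then b n else symd (b n) {a})) UNIV"
      by simp
  qed
  with T show ?thesis by (rule that)
qed

lemma z2_independent_on_PlusI:
  assumes "\<And>T S. T \<subseteq> A \<Longrightarrow> S \<subseteq> B \<Longrightarrow> finite T \<Longrightarrow> finite S \<Longrightarrow> sum v T + sum w S = 0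
      \<Longrightarrow> T = {} \<and> S = {}"
  shows "z2_independent_on (case_sum v w) (A <+> B)"
proof (rule z2_independent_onI)
  fix X assume X: "X \<subseteq> A <+> B" "finite X" and sum0: "sum (case_sum v w) X = 0"
  define T S where "T = Inl -` X" and "S = Inr -` X"
  have "x \<in> X \<longleftrightarrow> x \<in> T <+> S" for x
    by (cases x) (auto simp: T_def S_def)
  then have X_eq: "X = T <+> S" by blast
  have "finite T" "finite S"
    unfolding T_def S_def using X(2) by (auto intro: finite_vimageI)
  moreover have "T \<subseteq> A" "S \<subseteq> B"
    using X(1) unfolding T_def S_def by auto
  moreover have "sum v T + sum w S = 0"
    using sum0 \<open>finite T\<close> \<open>finite S\<close> by (simp add: X_eq sum.Plus comp_def)
  ultimately show "X = {}"
    using assms X_eq by simp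
qed

lemma z2_independent_on_Plus_Diff_finite:
  assumes v: "z2_independent_on v A" and w: "z2_independent_on w B" and "finite B"
  obtains R where "finite R" "z2_independent_on (case_sum v w) ((A - R) <+> B)"
proof -
  have "\<exists>T. T \<subseteq> A \<and> finite T \<and> (\<forall>T'. T' \<subseteq> A \<longrightarrow> finite T' \<longrightarrow> sum v T' = sum w S \<longrightarrow> T' = T)"
    for S
    by (rule z2_independent_on_unique_sum[OF v, where e = "sum w S"]) blast
  then obtain rep where rep: "\<And>S. rep S \<subseteq> A \<and> finite (rep S)"
    and rep_uniq: "\<And>S T. T \<subseteq> A \<Longrightarrow> finite T \<Longrightarrow> sum v T = sum w S \<Longrightarrow> T = rep S"
    by metis
  \<comment> \<open>R collects the representations of the finitely many vectors spanned by w ` B.\<close>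
  define R where "R = (\<Union>S\<in>Pow B. rep S)"
  have "finite R"
    using \<open>finite B\<close> rep by (simp add: R_def)
  moreover have "z2_independent_on (case_sum v w) ((A - R) <+> B)"
  proof (rule z2_independent_on_PlusI)
    fix T S assume T: "T \<subseteq> A - R" "finite T" and S: "S \<subseteq> B" "finite S"
      and "sum v T + sum w S = 0"
    then have "T = rep S"
      by (intro rep_uniq) auto
    moreover have "rep S \<subseteq> R"
      using S(1) by (auto simp: R_def)
    ultimately have "T = {}"
      using T(1) by blast
    then show "T = {} \<and> S = {}"
      using \<open>sum v T + sum w S = 0\<close> z2_independent_onD[OF w S(1,2)] by simp
  qed
  ultimately show ?thesis by (rule that)
qed

lemma lin_indep_fam_Plus_singletons:
  assumes "lin_indep_fam G A" "finite B"
  obtains R where "finite R" "lin_indep_fam (case_sum G (\<lambda>d. {d})) ((A - R) <+> B)"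
proof -
  have "(\<lambda>j. z2vec (case_sum G (\<lambda>d. {d}) j)) = case_sum (\<lambda>i. z2vec (G i)) (\<lambda>d. z2vec {d})"
    by (simp add: fun_eq_iff split: sum.split)
  then show ?thesis
    using z2_independent_on_Plus_Diff_finite[OF assms(1)[unfolded lin_indep_fam_iff_z2_independent_on]
        z2_independent_on_singletons assms(2)] that
    unfolding lin_indep_fam_iff_z2_independent_on by metis
qed

definition z2_scale :: "bit \<Rightarrow> ('a \<Rightarrow> bit) \<Rightarrow> 'a \<Rightarrow> bit" where
  "z2_scale c v = (\<lambda>x. c * v x)"

lemma vector_space_z2_scale: "vector_space z2_scale"
  by unfold_locales (auto simp: z2_scale_def fun_eq_iff algebra_simps)

lemma vector_space_bit: "vector_space ((*) :: bit \<Rightarrow> bit \<Rightarrow> bit)"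
  by unfold_locales (rule distrib_left distrib_right mult.assoc[symmetric] mult_1_left)+

lemma z2_independent_on_imp_independent:
  assumes indep: "z2_independent_on v J"
  shows "\<not> module.dependent z2_scale (v ` J)"
proof -
  interpret z2: vector_space z2_scale
    by (rule vector_space_z2_scale)
  show ?thesis
    unfolding z2.independent_explicit_finite_subsets
  proof (intro allI impI ballI)
    fix X u x
    assume X: "X \<subseteq> v ` J" "finite X" and sum0: "(\<Sum>x\<in>X. z2_scale (u x) x) = 0" and "x \<in> X"
    define T where "T = {j \<in> J. v j \<in> X \<and> u (v j) = 1}"
    have inj: "inj_on v T"
      using inj_on_if_z2_independent_on[OF indep] unfolding T_def by (rule inj_on_subset) auto
    have img: "v ` T = {x \<in> X. u x = 1}"
      using X(1) unfolding T_def by auto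
    then have "finite T"
      using X(2) inj by (simp add: finite_image_iff[symmetric])
    have "(\<Sum>x\<in>X. z2_scale (u x) x) = (\<Sum>x\<in>X. if u x = 1 then x else 0)"
      by (rule sum.cong) (auto simp: z2_scale_def fun_eq_iff)
    also have "\<dots> = (\<Sum>x\<in>{x \<in> X. u x = 1}. x)"
      using X(2) by (simp add: sum.inter_filter)
    also have "\<dots> = sum v T"
      unfolding img[symmetric] using inj by (simp add: sum.reindex)
    finally have "T = {}"
      using sum0 z2_independent_onD[OF indep _ \<open>finite T\<close>] unfolding T_def by auto
    then show "u x = 0"
      using img \<open>x \<in> X\<close> by auto
  qed
qed

lemma z2_linear_extension:
  fixes v :: "'i \<Rightarrow> 'a \<Rightarrow> bit"
  assumes indep: "z2_independent_on v J"
  obtains \<Phi> :: "('a \<Rightarrow> bit) \<Rightarrow> bit"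
  where "\<And>x y. \<Phi> (x + y) = \<Phi> x + \<Phi> y" "\<And>j. j \<in> J \<Longrightarrow> \<Phi> (v j) = h j"
proof -
  interpret z2: vector_space_pair "z2_scale :: bit \<Rightarrow> ('a \<Rightarrow> bit) \<Rightarrow> _" "(*) :: bit \<Rightarrow> bit \<Rightarrow> bit"
    by (intro vector_space_pair.intro vector_space_z2_scale vector_space_bit)
  obtain \<Phi> where lin: "Vector_Spaces.linear z2_scale (*) \<Phi>"
    and \<Phi>: "\<forall>x\<in>v ` J. \<Phi> x = h (inv_into J v x)"
    using z2.linear_independent_extend[OF z2_independent_on_imp_independent[OF indep],
        of "\<lambda>x. h (inv_into J v x)"] by blast
  show ?thesis
  proof (rule that)
    show "\<Phi> (x + y) = \<Phi> x + \<Phi> y" for x y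
      using lin by (rule z2.linear_add)
    show "\<Phi> (v j) = h j" if "j \<in> J" for j
      using \<Phi> that inv_into_f_f[OF inj_on_if_z2_independent_on[OF indep] that] by simp
  qed
qed

lemma symd_hom_extension:
  fixes G :: "'i \<Rightarrow> 'a set"
  assumes indep: "lin_indep_fam (case_sum G (\<lambda>d. {d})) (K <+> D0)"
  obtains \<phi> :: "'a set \<Rightarrow> bool"
  where "\<And>A B. \<phi> (symd A B) = (\<phi> A \<noteq> \<phi> B)" "\<And>i. i \<in> K \<Longrightarrow> \<not> \<phi> (G i)"
    "\<And>d. d \<in> D0 \<Longrightarrow> \<phi> {d} = F d"
proof -
  obtain \<Phi> :: "('a \<Rightarrow> bit) \<Rightarrow> bit" where add: "\<And>x y. \<Phi> (x + y) = \<Phi> x + \<Phi> y"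
    and \<Phi>: "\<And>j. j \<in> K <+> D0 \<Longrightarrow> \<Phi> (z2vec (case_sum G (\<lambda>d. {d}) j)) = case_sum (\<lambda>_. 0) (\<lambda>d. of_bool (F d)) j"
    using z2_linear_extension[OF indep[unfolded lin_indep_fam_iff_z2_independent_on],
        where h = "case_sum (\<lambda>_. 0) (\<lambda>d. of_bool (F d))"] by blast
  show ?thesis
  proof (rule that[of "\<lambda>A. \<Phi> (z2vec A) = 1"])
    show "(\<Phi> (z2vec (symd A B)) = 1) = ((\<Phi> (z2vec A) = 1) \<noteq> (\<Phi> (z2vec B) = 1))" for A B
      by (cases "\<Phi> (z2vec A)"; cases "\<Phi> (z2vec B)") (simp_all add: z2vec_symd add)
    show "\<not> \<Phi> (z2vec (G i)) = 1" if "i \<in> K" for i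
      using \<Phi>[OF InlI[OF that]] by simp
    show "(\<Phi> (z2vec {d}) = 1) = F d" if "d \<in> D0" for d
      using \<Phi>[OF InrI[OF that]] by simp
  qed
qed

lemma
  assumes "free_ultrafilter q"
  shows free_ultrafilter_Int: "A \<in> q \<Longrightarrow> B \<in> q \<Longrightarrow> A \<inter> B \<in> q"
    and free_ultrafilter_mono: "A \<in> q \<Longrightarrow> A \<subseteq> B \<Longrightarrow> B \<in> q"
    and free_ultrafilter_empty: "{} \<notin> q"
    and free_ultrafilter_Compl_finite: "finite X \<Longrightarrow> - X \<in> q"
  using assms unfolding free_ultrafilter_def by auto

lemma free_ultrafilter_Diff_finite:
  "free_ultrafilter q \<Longrightarrow> A \<in> q \<Longrightarrow> finite X \<Longrightarrow> A - X \<in> q"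
  unfolding Diff_eq by (intro free_ultrafilter_Int free_ultrafilter_Compl_finite)

lemma plim_eqI:
  assumes q: "free_ultrafilter q" and i: "{n. x n = i} \<in> q"
  shows "plim q x = i"
  unfolding plim_def
proof (rule the_equality)
  fix j assume "{n. x n = j} \<in> q"
  then have j_i: "{n. x n = j} \<inter> {n. x n = i} \<in> q"
    using i by (rule free_ultrafilter_Int[OF q])
  show "j = i"
  proof (rule ccontr)
    assume "j \<noteq> i"
    then have "{n. x n = j} \<inter> {n. x n = i} = {}" by auto
    with j_i free_ultrafilter_empty[OF q] show False by simp
  qed
qed (rule i)

lemma propPD:
  fixes g :: "'k \<Rightarrow> nat \<Rightarrow> 'k set"
  assumes "propP p" "countable D" "infinite D" "\<forall>\<alpha>\<in>D. good_seq (g \<alpha>)"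
  obtains U where "\<And>\<alpha>. \<alpha> \<in> D \<Longrightarrow> U \<alpha> \<in> p \<alpha>"
    "lin_indep_fam (\<lambda>(\<alpha>, n). g \<alpha> n) {(\<alpha>, n). \<alpha> \<in> D \<and> n \<in> U \<alpha>}"
  using assms(1)[unfolded propP_def, rule_format, of D g] assms(2-4) that by blast

lemma propP_twisted_independent:
  fixes p :: "'k \<Rightarrow> nat set set" and f :: "'k \<Rightarrow> nat \<Rightarrow> 'k set"
  assumes P: "propP p" and fgood: "\<forall>\<alpha>\<in>I. good_seq (f \<alpha>)" and D: "countable D" "infinite D"
  obtains U T where "\<And>\<alpha>. \<alpha> \<in> D \<Longrightarrow> U \<alpha> \<in> p \<alpha>" "\<And>\<alpha>. \<alpha> \<in> I \<Longrightarrow> finite (T \<alpha>)"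
    "lin_indep_fam (\<lambda>(\<alpha>, n). symd (f \<alpha> n) {\<alpha>}) {(\<alpha>, n). \<alpha> \<in> D \<inter> I \<and> n \<in> U \<alpha> - T \<alpha>}"
proof -
  have "\<exists>T. finite T \<and> good_seq (\<lambda>n. if n \<in> T then f \<alpha> n else symd (f \<alpha> n) {\<alpha>})"
    if "\<alpha> \<in> I" for \<alpha>
    using fgood that by (auto elim: good_seq_twist)
  then obtain T where T: "\<And>\<alpha>. \<alpha> \<in> I \<Longrightarrow> finite (T \<alpha>)"
    and T_good: "\<And>\<alpha>. \<alpha> \<in> I \<Longrightarrow> good_seq (\<lambda>n. if n \<in> T \<alpha> then f \<alpha> n else symd (f \<alpha> n) {\<alpha>})"
    by metis
  \<comment> \<open>Outside I any good sequence will do: (P) merely needs one for every index in D.\<close>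
  obtain e :: "nat \<Rightarrow> 'k" where "inj e"
    using D(2) infinite_countable_subset by blast
  define g where "g \<alpha> = (if \<alpha> \<in> I then (\<lambda>n. if n \<in> T \<alpha> then f \<alpha> n else symd (f \<alpha> n) {\<alpha>})
    else (\<lambda>n. {e n}))" for \<alpha>
  have g_good: "\<forall>\<alpha>\<in>D. good_seq (g \<alpha>)"
    using T_good good_seq_singletons[OF \<open>inj e\<close>] by (simp add: g_def)
  obtain U where U: "\<And>\<alpha>. \<alpha> \<in> D \<Longrightarrow> U \<alpha> \<in> p \<alpha>"
    and indep: "lin_indep_fam (\<lambda>(\<alpha>, n). g \<alpha> n) {(\<alpha>, n). \<alpha> \<in> D \<and> n \<in> U \<alpha>}"
    using propPD[OF P D g_good] by blast
  have "lin_indep_fam (\<lambda>(\<alpha>, n). g \<alpha> n) {(\<alpha>, n). \<alpha> \<in> D \<inter> I \<and> n \<in> U \<alpha> - T \<alpha>}"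
    using indep by (rule lin_indep_fam_subset) auto
  then have "lin_indep_fam (\<lambda>(\<alpha>, n). symd (f \<alpha> n) {\<alpha>}) {(\<alpha>, n). \<alpha> \<in> D \<inter> I \<and> n \<in> U \<alpha> - T \<alpha>}"
    by (rule lin_indep_fam_cong[THEN iffD1, rotated]) (auto simp: g_def)
  with U T show ?thesis
    using that by blast
qed

lemma propP_twisted_singletons_independent:
  fixes p :: "'k \<Rightarrow> nat set set" and f :: "'k \<Rightarrow> nat \<Rightarrow> 'k set"
  assumes pfree: "\<forall>\<alpha>. free_ultrafilter (p \<alpha>)" and P: "propP p"
    and fgood: "\<forall>\<alpha>\<in>I. good_seq (f \<alpha>)" and D: "countable D" "infinite D" and "finite D0"
  obtains V where "\<And>\<alpha>. \<alpha> \<in> D \<inter> I \<Longrightarrow> V \<alpha> \<in> p \<alpha>"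
    "lin_indep_fam (case_sum (\<lambda>(\<alpha>, n). symd (f \<alpha> n) {\<alpha>}) (\<lambda>d. {d}))
       ({(\<alpha>, n). \<alpha> \<in> D \<inter> I \<and> n \<in> V \<alpha>} <+> D0)"
proof -
  obtain U T where U: "\<And>\<alpha>. \<alpha> \<in> D \<Longrightarrow> U \<alpha> \<in> p \<alpha>" and T: "\<And>\<alpha>. \<alpha> \<in> I \<Longrightarrow> finite (T \<alpha>)"
    and indep: "lin_indep_fam (\<lambda>(\<alpha>, n). symd (f \<alpha> n) {\<alpha>}) {(\<alpha>, n). \<alpha> \<in> D \<inter> I \<and> n \<in> U \<alpha> - T \<alpha>}"
    using propP_twisted_independent[OF P fgood D] by blast
  obtain R where "finite R"
    and indep_R: "lin_indep_fam (case_sum (\<lambda>(\<alpha>, n). symd (f \<alpha> n) {\<alpha>}) (\<lambda>d. {d}))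
      (({(\<alpha>, n). \<alpha> \<in> D \<inter> I \<and> n \<in> U \<alpha> - T \<alpha>} - R) <+> D0)"
    using lin_indep_fam_Plus_singletons[OF indep \<open>finite D0\<close>] by blast
  define V where "V \<alpha> = U \<alpha> - T \<alpha> - Pair \<alpha> -` R" for \<alpha>
  show ?thesis
  proof (rule that)
    show "V \<alpha> \<in> p \<alpha>" if "\<alpha> \<in> D \<inter> I" for \<alpha>
      unfolding V_def using pfree U T that \<open>finite R\<close>
      by (intro free_ultrafilter_Diff_finite finite_vimageI) (auto intro: inj_onI)
    have "{(\<alpha>, n). \<alpha> \<in> D \<inter> I \<and> n \<in> V \<alpha>} = {(\<alpha>, n). \<alpha> \<in> D \<inter> I \<and> n \<in> U \<alpha> - T \<alpha>} - R"
      by (auto simp: V_def)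
    then show "lin_indep_fam (case_sum (\<lambda>(\<alpha>, n). symd (f \<alpha> n) {\<alpha>}) (\<lambda>d. {d}))
       ({(\<alpha>, n). \<alpha> \<in> D \<inter> I \<and> n \<in> V \<alpha>} <+> D0)"
      using indep_R by simp
  qed
qed

theorem mainTheorem6:
  fixes p :: "'k \<Rightarrow> nat set set"
    and I D D0 :: "'k set"
    and f :: "'k \<Rightarrow> nat \<Rightarrow> 'k set"
    and F :: "'k \<Rightarrow> bool"
  assumes card2c: "(UNIV :: 'k set) \<approx> (UNIV :: nat set set)"
    and pfree: "\<forall>\<alpha>. free_ultrafilter (p \<alpha>)"
    and P: "propP p"
    and fgood: "\<forall>\<alpha>\<in>I. good_seq (f \<alpha>)"
    and Dcount: "countable D" and Dinf: "infinite D"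
    and Dclosed: "\<forall>\<alpha>\<in>D \<inter> I. (\<Union>n. f \<alpha> n) \<subseteq> D"
    and D0: "D0 \<subseteq> D" "finite D0"
  shows "\<exists>\<phi> :: 'k set \<Rightarrow> bool. z2_hom D \<phi> \<and>
           (\<forall>\<alpha>\<in>D \<inter> I. \<phi> {\<alpha>} = plim (p \<alpha>) (\<lambda>n. \<phi> (f \<alpha> n))) \<and>
           (\<forall>d\<in>D0. \<phi> {d} = F d)"
proof -
  obtain V where V: "\<And>\<alpha>. \<alpha> \<in> D \<inter> I \<Longrightarrow> V \<alpha> \<in> p \<alpha>"
    and indep: "lin_indep_fam (case_sum (\<lambda>(\<alpha>, n). symd (f \<alpha> n) {\<alpha>}) (\<lambda>d. {d}))
      ({(\<alpha>, n). \<alpha> \<in> D \<inter> I \<and> n \<in> V \<alpha>} <+> D0)"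
    using propP_twisted_singletons_independent[OF pfree P fgood Dcount Dinf D0(2)] by blast
  obtain \<phi> where hom: "\<And>A B. \<phi> (symd A B) = (\<phi> A \<noteq> \<phi> B)"
    and vanish: "\<And>i. i \<in> {(\<alpha>, n). \<alpha> \<in> D \<inter> I \<and> n \<in> V \<alpha>} \<Longrightarrow> \<not> \<phi> ((\<lambda>(\<alpha>, n). symd (f \<alpha> n) {\<alpha>}) i)"
    and \<phi>_D0: "\<And>d. d \<in> D0 \<Longrightarrow> \<phi> {d} = F d"
    using symd_hom_extension[OF indep] by blast
  have "\<phi> {\<alpha>} = plim (p \<alpha>) (\<lambda>n. \<phi> (f \<alpha> n))" if "\<alpha> \<in> D \<inter> I" for \<alpha>
  proof -
    have "V \<alpha> \<subseteq> {n. \<phi> (f \<alpha> n) = \<phi> {\<alpha>}}"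
      using vanish[of "(\<alpha>, _)"] hom that by auto
    then have "{n. \<phi> (f \<alpha> n) = \<phi> {\<alpha>}} \<in> p \<alpha>"
      using free_ultrafilter_mono pfree V[OF that] by blast
    then show ?thesis
      using plim_eqI pfree by metis
  qed
  moreover have "z2_hom D \<phi>"
    using hom by (simp add: z2_hom_def)
  ultimately show ?thesis
    using \<phi>_D0 by blast
qed

end
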